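(* Let $X$ be a real Banach space and $Y$ a closed subspace of $X$. The following are equivalent: (a) $Y$ has property-$(HB)$ in $X$. (b) $Y$ has property-$(U)$ in $X$, and there exists a linear projection $P$ on $X^*$ with range $Y^\perp$ such that $\|P\|=1=\|I-P\|$. (c) $Y^\perp$ is a Chebyshev subspace of $X^*$, and the metric projection $P_{Y^\perp}:X^*\to Y^\perp$ is a linear projection of norm $1$.
   Context: $Y^\perp=\{x^*\in X^*:x^*|_Y=0\}$. $Y$ has property-$(U)$ in $X$ if every $y^*\in Y^*$ has a unique $x^*\in X^*$ with $x^*|_Y=y^*$ and $\|x^*\|=\|y^*\|$. $Y$ has property-$(HB)$ in $X$ if there is a linear projection $P$ on $X^*$ with range $Y^\perp$ and $\|P\|=1$ such that, writing $G=(I-P)(X^* )$, for every $x^*\in X^*$ with decomposition $x^*=y^\#+y^\perp$, $y^\#\in G$, $y^\perp\in Y^\perp$, $y^\perp\neq0$, one has $\|x^*\|>\|y^\#\|$ and $\|x^*\|\ge\|y^\perp\|$. A subspace $V$ of a Banach space $W$ is Chebyshev if every $w\in W$ has exactly one nearest point in $V$; the metric projection $P_V$ sends $w$ to this nearest point. *)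

theory Defs
  imports "HOL-Analysis.Analysis"
begin

text \<open>The dual space X* of a real Banach space X is the type of bounded linear
functionals \<open>'a \<Rightarrow>\<^sub>L real\<close> with the operator norm.\<close>

definition annihilator :: "'a::real_normed_vector set \<Rightarrow> ('a \<Rightarrow>\<^sub>L real) set" where
  "annihilator Y = {f. \<forall>y\<in>Y. blinfun_apply f y = 0}"

text \<open>Elements of Y* (for a subspace Y, given as a set): real functions that are
linear and bounded on Y (values off Y are irrelevant).\<close>

definition in_subspace_dual :: "'a::real_normed_vector set \<Rightarrow> ('a \<Rightarrow> real) \<Rightarrow> bool" where
  "in_subspace_dual Y g \<longleftrightarrow>
     (\<forall>x\<in>Y. \<forall>y\<in>Y. \<forall>a b. g (a *\<^sub>R x + b *\<^sub>R y) = a * g x + b * g y) \<and>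
     (\<exists>K. \<forall>y\<in>Y. \<bar>g y\<bar> \<le> K * norm y)"

definition subspace_dual_norm :: "'a::real_normed_vector set \<Rightarrow> ('a \<Rightarrow> real) \<Rightarrow> real" where
  "subspace_dual_norm Y g = Sup {\<bar>g y\<bar> | y. y \<in> Y \<and> norm y \<le> 1}"

definition property_U :: "'a::real_normed_vector set \<Rightarrow> bool" where
  "property_U Y \<longleftrightarrow>
     (\<forall>g. in_subspace_dual Y g \<longrightarrow>
        (\<exists>!f :: 'a \<Rightarrow>\<^sub>L real. (\<forall>y\<in>Y. blinfun_apply f y = g y) \<and> norm f = subspace_dual_norm Y g))"

definition linear_projection :: "('b::real_vector \<Rightarrow> 'b) \<Rightarrow> bool" where
  "linear_projection P \<longleftrightarrow> linear P \<and> P \<circ> P = P"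

definition has_norm_one :: "('b::real_normed_vector \<Rightarrow> 'b) \<Rightarrow> bool" where
  "has_norm_one P \<longleftrightarrow> bounded_linear P \<and> onorm P = 1"

definition property_HB :: "'a::real_normed_vector set \<Rightarrow> bool" where
  "property_HB Y \<longleftrightarrow>
     (\<exists>P :: ('a \<Rightarrow>\<^sub>L real) \<Rightarrow> ('a \<Rightarrow>\<^sub>L real).
        linear_projection P \<and> range P = annihilator Y \<and> has_norm_one P \<and>
        (\<forall>x yh yp. yh \<in> range (\<lambda>z. z - P z) \<and> yp \<in> annihilator Y \<and> yp \<noteq> 0 \<and> x = yh + yp
             \<longrightarrow> norm x > norm yh \<and> norm x \<ge> norm yp))"

definition chebyshev :: "'b::metric_space set \<Rightarrow> bool" where
  "chebyshev V \<longleftrightarrow> (\<forall>w. \<exists>!v. v \<in> V \<and> (\<forall>u\<in>V. dist w v \<le> dist w u))"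

definition metric_projection :: "'b::metric_space set \<Rightarrow> 'b \<Rightarrow> 'b" where
  "metric_projection V w = (THE v. v \<in> V \<and> (\<forall>u\<in>V. dist w v \<le> dist w u))"

end

theory Submission
  imports Defs
begin

(* Write A for the annihilator of Y. For a linear projection P onto A the decomposition
   x = (x - P x) + P x is the only one of the kind appearing in property-(HB), so property-(HB)
   says that P has norm one and that norm (x - P x) < norm x whenever P x \<noteq> 0. Applied to x - u
   for u \<in> A, this strict inequality makes P x the unique point of A nearest to x; conversely a
   linear metric projection onto A has it, because 0 \<in> A. The norm-preserving Hahn-Banach
   extensions of y* \<in> Y* are the elements of least norm in a coset f + A: the strict inequality
   pushes all of them into ker P, where two of them can only coincide, and conversely uniqueness
   of these extensions excludes norm (x - P x) = norm x when P x \<noteq> 0. *)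

section \<open>Hahn-Banach extension\<close>

(* Graphs of linear functionals on subspaces dominated by K * norm x, as sets of pairs so that
   Zorn's lemma applies to \<subseteq>; single-valuedness follows from the bound. *)
definition dominated_linear_graph :: "real \<Rightarrow> ('a::real_normed_vector \<times> real) set \<Rightarrow> bool" where
  "dominated_linear_graph K H \<longleftrightarrow>
     (0, 0) \<in> H \<and>
     (\<forall>x r y s a b. (x, r) \<in> H \<longrightarrow> (y, s) \<in> H \<longrightarrow> (a *\<^sub>R x + b *\<^sub>R y, a * r + b * s) \<in> H) \<and>
     (\<forall>x r. (x, r) \<in> H \<longrightarrow> r \<le> K * norm x)"

lemma dominated_linear_graphD:
  assumes "dominated_linear_graph K H"
  shows dominated_linear_graph_zero: "(0, 0) \<in> H"
    and dominated_linear_graph_lincomb: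
      "\<And>x r y s a b. (x, r) \<in> H \<Longrightarrow> (y, s) \<in> H \<Longrightarrow> (a *\<^sub>R x + b *\<^sub>R y, a * r + b * s) \<in> H"
    and dominated_linear_graph_bound: "\<And>x r. (x, r) \<in> H \<Longrightarrow> r \<le> K * norm x"
  using assms unfolding dominated_linear_graph_def by blast+

lemma dominated_linear_graph_scaleR:
  assumes "dominated_linear_graph K H" and "(x, r) \<in> H"
  shows "(a *\<^sub>R x, a * r) \<in> H"
  using dominated_linear_graph_lincomb[OF assms(1,2) dominated_linear_graph_zero[OF assms(1)], of a 0]
  by simp

lemma dominated_linear_graph_unique:
  assumes H: "dominated_linear_graph K H" and "(x, r) \<in> H" and "(x, s) \<in> H"
  shows "r = s"
proof -
  have "(0, r - s) \<in> H" and "(0, s - r) \<in> H"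
    using dominated_linear_graph_lincomb[OF H assms(2,3), of 1 "-1"]
      dominated_linear_graph_lincomb[OF H assms(3,2), of 1 "-1"] by simp_all
  then have "r - s \<le> 0" and "s - r \<le> 0"
    using dominated_linear_graph_bound[OF H] by fastforce+
  then show ?thesis
    by linarith
qed

lemma dominated_linear_graph_Union:
  assumes "C \<noteq> {}" and graphs: "\<And>H. H \<in> C \<Longrightarrow> dominated_linear_graph K H"
    and chain: "\<And>A B. A \<in> C \<Longrightarrow> B \<in> C \<Longrightarrow> A \<subseteq> B \<or> B \<subseteq> A"
  shows "dominated_linear_graph K (\<Union>C)"
  unfolding dominated_linear_graph_def
proof (intro conjI allI impI)
  show "(0, 0) \<in> \<Union>C"
    using assms(1) graphs dominated_linear_graph_zero by blast
next
  fix x r y s a b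
  assume "(x, r) \<in> \<Union>C" "(y, s) \<in> \<Union>C"
  then obtain H where "H \<in> C" "(x, r) \<in> H" "(y, s) \<in> H"
    using chain by blast
  then show "(a *\<^sub>R x + b *\<^sub>R y, a * r + b * s) \<in> \<Union>C"
    using graphs dominated_linear_graph_lincomb by blast
next
  fix x r
  assume "(x, r) \<in> \<Union>C"
  then show "r \<le> K * norm x"
    using graphs dominated_linear_graph_bound by blast
qed

lemma dominated_linear_graph_extension_value:
  assumes H: "dominated_linear_graph K H" and K: "K \<ge> 0"
  obtains c where "\<And>d r t. (d, r) \<in> H \<Longrightarrow> r + t * c \<le> K * norm (d + t *\<^sub>R x0)"
proof -
  have gap: "p - K * norm (u - x0) \<le> K * norm (v + x0) - q" if "(u, p) \<in> H" "(v, q) \<in> H" for u p v q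
  proof -
    have "p + q \<le> K * norm (u + v)"
      using dominated_linear_graph_bound[OF H dominated_linear_graph_lincomb[OF H that, of 1 1]]
      by simp
    also have "\<dots> \<le> K * (norm (u - x0) + norm (v + x0))"
      using K norm_triangle_ineq[of "u - x0" "v + x0"] by (simp add: mult_left_mono)
    finally show ?thesis
      by (simp add: algebra_simps)
  qed
  define c where "c = Sup {p - K * norm (u - x0) | u p. (u, p) \<in> H}"
  have below: "p - K * norm (u - x0) \<le> c" if "(u, p) \<in> H" for u p
    unfolding c_def using that gap[OF _ dominated_linear_graph_zero[OF H]]
    by (intro cSup_upper bdd_aboveI[where M = "K * norm (0 + x0) - 0"]) auto
  have above: "c \<le> K * norm (v + x0) - q" if "(v, q) \<in> H" for v q
    unfolding c_def using gap[OF _ that] dominated_linear_graph_zero[OF H]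
    by (intro cSup_least) auto
  show thesis
  proof (rule that)
    fix d r and t :: real
    assume dr: "(d, r) \<in> H"
    consider "t = 0" | "t > 0" | "t < 0"
      by linarith
    then show "r + t * c \<le> K * norm (d + t *\<^sub>R x0)"
    proof cases
      case 1
      then show ?thesis
        using dominated_linear_graph_bound[OF H dr] by simp
    next
      case 2
      have "d + t *\<^sub>R x0 = t *\<^sub>R ((1 / t) *\<^sub>R d + x0)"
        using 2 by (simp add: algebra_simps)
      then have norm_eq: "norm (d + t *\<^sub>R x0) = t * norm ((1 / t) *\<^sub>R d + x0)"
        using 2 by simp
      have "c \<le> K * norm ((1 / t) *\<^sub>R d + x0) - (1 / t) * r"
        by (rule above[OF dominated_linear_graph_scaleR[OF H dr]])
      then have "t * c \<le> t * (K * norm ((1 / t) *\<^sub>R d + x0) - (1 / t) * r)"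
        using 2 by (simp add: mult_left_mono)
      then show ?thesis
        using 2 by (simp add: norm_eq algebra_simps)
    next
      case 3
      have "d + t *\<^sub>R x0 = (- t) *\<^sub>R ((1 / - t) *\<^sub>R d - x0)"
        using 3 by (simp add: algebra_simps)
      then have norm_eq: "norm (d + t *\<^sub>R x0) = - t * norm ((1 / - t) *\<^sub>R d - x0)"
        using 3 by simp
      have "(1 / - t) * r - K * norm ((1 / - t) *\<^sub>R d - x0) \<le> c"
        by (rule below[OF dominated_linear_graph_scaleR[OF H dr]])
      then have "- t * ((1 / - t) * r - K * norm ((1 / - t) *\<^sub>R d - x0)) \<le> - t * c"
        using 3 by (simp add: mult_left_mono)
      then show ?thesis
        using 3 by (simp add: norm_eq algebra_simps)
    qed
  qed
qed

lemma dominated_linear_graph_extend: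
  assumes H: "dominated_linear_graph K H" and K: "K \<ge> 0"
  obtains H' r where "dominated_linear_graph K H'" "H \<subseteq> H'" "(x0, r) \<in> H'"
proof -
  obtain c where c: "\<And>d r t. (d, r) \<in> H \<Longrightarrow> r + t * c \<le> K * norm (d + t *\<^sub>R x0)"
    using dominated_linear_graph_extension_value[OF H K] by blast
  define H' where "H' = {(d + t *\<^sub>R x0, r + t * c) | d r t. (d, r) \<in> H}"
  have "dominated_linear_graph K H'"
    unfolding dominated_linear_graph_def
  proof (intro conjI allI impI)
    show "(0, 0) \<in> H'"
      unfolding H'_def using dominated_linear_graph_zero[OF H] by force
  next
    fix x r y s a b
    assume "(x, r) \<in> H'" "(y, s) \<in> H'"
    then obtain d1 r1 t1 d2 r2 t2 where dr: "(d1, r1) \<in> H" "(d2, r2) \<in> H"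
      and xy: "x = d1 + t1 *\<^sub>R x0" "r = r1 + t1 * c" "y = d2 + t2 *\<^sub>R x0" "s = r2 + t2 * c"
      unfolding H'_def by blast
    have "(a *\<^sub>R d1 + b *\<^sub>R d2, a * r1 + b * r2) \<in> H"
      using dominated_linear_graph_lincomb[OF H dr] .
    moreover have "(a *\<^sub>R x + b *\<^sub>R y, a * r + b * s) =
        ((a *\<^sub>R d1 + b *\<^sub>R d2) + (a * t1 + b * t2) *\<^sub>R x0, (a * r1 + b * r2) + (a * t1 + b * t2) * c)"
      using xy by (simp add: algebra_simps)
    ultimately show "(a *\<^sub>R x + b *\<^sub>R y, a * r + b * s) \<in> H'"
      unfolding H'_def by blast
  next
    fix x r
    assume "(x, r) \<in> H'"
    then obtain d q t where "(d, q) \<in> H" "x = d + t *\<^sub>R x0" "r = q + t * c"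
      unfolding H'_def by blast
    then show "r \<le> K * norm x"
      using c by simp
  qed
  moreover have "H \<subseteq> H'"
    unfolding H'_def by force
  moreover have "(x0, c) \<in> H'"
    unfolding H'_def using dominated_linear_graph_zero[OF H] by force
  ultimately show thesis
    by (rule that)
qed

lemma total_dominated_linear_graph_blinfun:
  assumes H: "dominated_linear_graph K H" and K: "K \<ge> 0" and total: "\<And>x. \<exists>r. (x, r) \<in> H"
  obtains f :: "'a::real_normed_vector \<Rightarrow>\<^sub>L real"
  where "\<And>x r. (x, r) \<in> H \<Longrightarrow> f x = r" and "norm f \<le> K"
proof -
  obtain f where f: "\<And>x. (x, f x) \<in> H"
    using total by metis
  have f_eq: "f x = r" if "(x, r) \<in> H" for x r
    using dominated_linear_graph_unique[OF H f that] .
  have f_bound: "norm (f x) \<le> K * norm x" for x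
  proof -
    have "f (- x) = - f x"
      using f_eq[OF dominated_linear_graph_scaleR[OF H f, of "-1"]] by simp
    then show ?thesis
      using dominated_linear_graph_bound[OF H f, of x] dominated_linear_graph_bound[OF H f, of "- x"]
      by simp
  qed
  have f_linear: "bounded_linear f"
  proof (rule bounded_linear_intro)
    show "f (x + y) = f x + f y" for x y
      using f_eq[OF dominated_linear_graph_lincomb[OF H f[of x] f[of y], of 1 1]] by simp
    show "f (a *\<^sub>R x) = a *\<^sub>R f x" for a x
      using f_eq[OF dominated_linear_graph_scaleR[OF H f]] by simp
    show "norm (f x) \<le> norm x * K" for x
      using f_bound by (simp add: mult.commute)
  qed
  have "norm (Blinfun f) \<le> K"
    using f_bound by (intro norm_blinfun_bound[OF K]) (simp add: bounded_linear_Blinfun_apply[OF f_linear])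
  then show thesis
    using f_eq by (intro that[of "Blinfun f"]) (simp_all add: bounded_linear_Blinfun_apply[OF f_linear])
qed

theorem hahn_banach_dominated_linear_graph:
  assumes H0: "dominated_linear_graph K H0" and K: "K \<ge> 0"
  obtains f :: "'a::real_normed_vector \<Rightarrow>\<^sub>L real"
  where "\<And>x r. (x, r) \<in> H0 \<Longrightarrow> f x = r" and "norm f \<le> K"
proof -
  let ?\<A> = "{H. dominated_linear_graph K H \<and> H0 \<subseteq> H}"
  have "\<exists>M\<in>?\<A>. \<forall>X\<in>?\<A>. M \<subseteq> X \<longrightarrow> X = M"
  proof (rule subset_Zorn_nonempty)
    show "?\<A> \<noteq> {}"
      using H0 by blast
    fix \<C>
    assume "\<C> \<noteq> {}" and "subset.chain ?\<A> \<C>"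
    then have "\<C> \<subseteq> ?\<A>" and chain: "\<forall>A\<in>\<C>. \<forall>B\<in>\<C>. A \<subseteq> B \<or> B \<subseteq> A"
      unfolding subset_chain_def by blast+
    have "dominated_linear_graph K (\<Union>\<C>)"
      using \<open>\<C> \<noteq> {}\<close> \<open>\<C> \<subseteq> ?\<A>\<close> chain by (intro dominated_linear_graph_Union) auto
    moreover have "H0 \<subseteq> \<Union>\<C>"
      using \<open>\<C> \<noteq> {}\<close> \<open>\<C> \<subseteq> ?\<A>\<close> by blast
    ultimately show "\<Union>\<C> \<in> ?\<A>"
      by blast
  qed
  then obtain M where "M \<in> ?\<A>" and maximal: "\<forall>X\<in>?\<A>. M \<subseteq> X \<longrightarrow> X = M"
    by blast
  then have M: "dominated_linear_graph K M" "H0 \<subseteq> M"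
    by simp_all
  have "\<exists>r. (x, r) \<in> M" for x
  proof -
    obtain M' r where "dominated_linear_graph K M'" "M \<subseteq> M'" "(x, r) \<in> M'"
      using dominated_linear_graph_extend[OF M(1) K] .
    then show ?thesis
      using maximal \<open>H0 \<subseteq> M\<close> by blast
  qed
  then obtain f :: "'a \<Rightarrow>\<^sub>L real" where f: "\<And>x r. (x, r) \<in> M \<Longrightarrow> f x = r" "norm f \<le> K"
    using total_dominated_linear_graph_blinfun[OF M(1) K] by blast
  show thesis
    using M(2) f by (intro that[of f]) auto
qed

section \<open>Norm-preserving extensions\<close>

lemma in_subspace_dual_lincomb:
  "in_subspace_dual Y g \<Longrightarrow> x \<in> Y \<Longrightarrow> y \<in> Y \<Longrightarrow> g (a *\<^sub>R x + b *\<^sub>R y) = a * g x + b * g y"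
  unfolding in_subspace_dual_def by blast

lemma in_subspace_dual_scaleR: "in_subspace_dual Y g \<Longrightarrow> y \<in> Y \<Longrightarrow> g (a *\<^sub>R y) = a * g y"
  using in_subspace_dual_lincomb[of Y g y y a 0] by simp

lemma in_subspace_dual_blinfun: "in_subspace_dual Y (blinfun_apply f)"
  unfolding in_subspace_dual_def
  using norm_blinfun[of f] by (auto simp: blinfun.add_right blinfun.scaleR_right intro!: exI[of _ "norm f"])

lemma subspace_dual_norm_values:
  assumes Y: "subspace Y" and g: "in_subspace_dual Y g"
  shows "0 \<in> {\<bar>g y\<bar> | y. y \<in> Y \<and> norm y \<le> 1}"
    and "bdd_above {\<bar>g y\<bar> | y. y \<in> Y \<and> norm y \<le> 1}"
proof -
  show "0 \<in> {\<bar>g y\<bar> | y. y \<in> Y \<and> norm y \<le> 1}"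
    using subspace_0[OF Y] in_subspace_dual_scaleR[OF g subspace_0[OF Y], of 0] by force
  obtain K where K: "\<And>y. y \<in> Y \<Longrightarrow> \<bar>g y\<bar> \<le> K * norm y"
    using g unfolding in_subspace_dual_def by blast
  have "\<bar>g y\<bar> \<le> \<bar>K\<bar>" if "y \<in> Y" "norm y \<le> 1" for y
  proof -
    have "\<bar>g y\<bar> \<le> K * norm y"
      using K that(1) .
    also have "\<dots> \<le> \<bar>K\<bar> * 1"
      using that(2) by (intro mult_mono) auto
    finally show ?thesis
      by simp
  qed
  then show "bdd_above {\<bar>g y\<bar> | y. y \<in> Y \<and> norm y \<le> 1}"
    by (intro bdd_aboveI[where M = "\<bar>K\<bar>"]) blast
qed

lemma subspace_dual_norm_nonneg:
  assumes "subspace Y" and "in_subspace_dual Y g"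
  shows "0 \<le> subspace_dual_norm Y g"
  unfolding subspace_dual_norm_def using subspace_dual_norm_values[OF assms] by (rule cSup_upper)

lemma subspace_dual_norm_bound:
  assumes Y: "subspace Y" and g: "in_subspace_dual Y g" and "y \<in> Y"
  shows "\<bar>g y\<bar> \<le> subspace_dual_norm Y g * norm y"
proof (cases "y = 0")
  case True
  then show ?thesis
    using in_subspace_dual_scaleR[OF g \<open>y \<in> Y\<close>, of 0] by simp
next
  case False
  have "\<bar>g (y /\<^sub>R norm y)\<bar> \<le> subspace_dual_norm Y g"
    unfolding subspace_dual_norm_def
    using subspace_scale[OF Y \<open>y \<in> Y\<close>] False
    by (intro cSup_upper subspace_dual_norm_values[OF Y g]) auto
  moreover have "\<bar>g (y /\<^sub>R norm y)\<bar> = \<bar>g y\<bar> / norm y"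
    using in_subspace_dual_scaleR[OF g \<open>y \<in> Y\<close>] by (simp add: abs_mult divide_inverse_commute)
  ultimately show ?thesis
    using False by (simp add: pos_divide_le_eq)
qed

lemma subspace_dual_norm_le_norm:
  assumes Y: "subspace Y" and "\<forall>y\<in>Y. blinfun_apply f y = g y"
  shows "subspace_dual_norm Y g \<le> norm f"
  unfolding subspace_dual_norm_def
proof (rule cSup_least)
  show "{\<bar>g y\<bar> | y. y \<in> Y \<and> norm y \<le> 1} \<noteq> {}"
    using subspace_0[OF Y] by force
next
  fix v
  assume "v \<in> {\<bar>g y\<bar> | y. y \<in> Y \<and> norm y \<le> 1}"
  then obtain y where "y \<in> Y" "norm y \<le> 1" "v = \<bar>g y\<bar>"
    by blast
  then have "v = norm (f y)"
    using assms(2) by simp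
  also have "\<dots> \<le> norm f * norm y"
    by (rule norm_blinfun)
  also have "\<dots> \<le> norm f"
    using \<open>norm y \<le> 1\<close> mult_left_mono[of "norm y" 1 "norm f"] by simp
  finally show "v \<le> norm f" .
qed

definition norm_preserving_extension ::
    "'a::real_normed_vector set \<Rightarrow> ('a \<Rightarrow> real) \<Rightarrow> ('a \<Rightarrow>\<^sub>L real) \<Rightarrow> bool" where
  "norm_preserving_extension Y g f \<longleftrightarrow>
     (\<forall>y\<in>Y. blinfun_apply f y = g y) \<and> norm f = subspace_dual_norm Y g"

lemma property_U_iff_unique_extension:
  "property_U Y \<longleftrightarrow> (\<forall>g. in_subspace_dual Y g \<longrightarrow> (\<exists>!f. norm_preserving_extension Y g f))"
  unfolding property_U_def norm_preserving_extension_def ..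

theorem norm_preserving_extension_exists:
  assumes Y: "subspace Y" and g: "in_subspace_dual Y g"
  obtains f where "norm_preserving_extension Y g f"
proof -
  let ?H = "{(y, g y) | y. y \<in> Y}"
  have H: "dominated_linear_graph (subspace_dual_norm Y g) ?H"
    unfolding dominated_linear_graph_def
  proof (intro conjI allI impI)
    show "(0, 0) \<in> ?H"
      using subspace_0[OF Y] in_subspace_dual_scaleR[OF g subspace_0[OF Y], of 0] by force
  next
    fix x r y s a b
    assume "(x, r) \<in> ?H" "(y, s) \<in> ?H"
    then have "x \<in> Y" "y \<in> Y" "r = g x" "s = g y"
      by auto
    then show "(a *\<^sub>R x + b *\<^sub>R y, a * r + b * s) \<in> ?H"
      using Y in_subspace_dual_lincomb[OF g] by (force intro: subspace_add subspace_scale)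
  next
    fix x r
    assume "(x, r) \<in> ?H"
    then show "r \<le> subspace_dual_norm Y g * norm x"
      using subspace_dual_norm_bound[OF Y g] by force
  qed
  obtain f :: "'a \<Rightarrow>\<^sub>L real"
    where f: "\<And>x r. (x, r) \<in> ?H \<Longrightarrow> f x = r" "norm f \<le> subspace_dual_norm Y g"
    using hahn_banach_dominated_linear_graph[OF H subspace_dual_norm_nonneg[OF Y g]] by blast
  have "\<forall>y\<in>Y. blinfun_apply f y = g y"
    using f(1) by blast
  then have "norm_preserving_extension Y g f"
    unfolding norm_preserving_extension_def
    using f(2) subspace_dual_norm_le_norm[OF Y] by (simp add: order_antisym)
  then show thesis
    by (rule that)
qed

lemma exists_norming_blinfun:
  obtains f :: "'a::real_normed_vector \<Rightarrow>\<^sub>L real" where "norm f \<le> 1" and "f x = norm x"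
proof -
  let ?H = "{(t *\<^sub>R x, t * norm x) | t. True}"
  have H: "dominated_linear_graph 1 ?H"
    unfolding dominated_linear_graph_def
  proof (intro conjI allI impI)
    show "(0, 0) \<in> ?H"
      by (auto intro!: exI[of _ 0])
  next
    fix y r z s a b
    assume "(y, r) \<in> ?H" "(z, s) \<in> ?H"
    then obtain t1 t2 where "y = t1 *\<^sub>R x" "r = t1 * norm x" "z = t2 *\<^sub>R x" "s = t2 * norm x"
      by blast
    then have "(a *\<^sub>R y + b *\<^sub>R z, a * r + b * s) = ((a * t1 + b * t2) *\<^sub>R x, (a * t1 + b * t2) * norm x)"
      by (simp add: algebra_simps)
    then show "(a *\<^sub>R y + b *\<^sub>R z, a * r + b * s) \<in> ?H"
      by blast
  next
    fix y r
    assume "(y, r) \<in> ?H"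
    then obtain t where "y = t *\<^sub>R x" "r = t * norm x"
      by blast
    then show "r \<le> 1 * norm y"
      by (simp add: mult_right_mono)
  qed
  obtain f :: "'a \<Rightarrow>\<^sub>L real" where "\<And>y r. (y, r) \<in> ?H \<Longrightarrow> f y = r" "norm f \<le> 1"
    using hahn_banach_dominated_linear_graph[OF H zero_le_one] by blast
  moreover have "(1 *\<^sub>R x, 1 * norm x) \<in> ?H"
    by blast
  ultimately show thesis
    using that by simp
qed

section \<open>Projections onto the annihilator\<close>

lemma zero_in_annihilator: "0 \<in> annihilator Y"
  unfolding annihilator_def by simp

lemma diff_in_annihilator_iff: "f - g \<in> annihilator Y \<longleftrightarrow> (\<forall>y\<in>Y. blinfun_apply f y = blinfun_apply g y)"
  unfolding annihilator_def by (simp add: blinfun.diff_left)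

lemma annihilator_neq_UNIV:
  assumes "y \<in> Y" and "y \<noteq> 0"
  shows "annihilator Y \<noteq> UNIV"
proof -
  obtain f :: "'a \<Rightarrow>\<^sub>L real" where "f y = norm y"
    using exists_norming_blinfun by blast
  then have "f \<notin> annihilator Y"
    using assms unfolding annihilator_def by (auto intro!: bexI[of _ y])
  then show ?thesis
    by blast
qed

lemma linear_projection_linear: "linear_projection P \<Longrightarrow> linear P"
  unfolding linear_projection_def by simp

lemma linear_projection_fixes_range: "linear_projection P \<Longrightarrow> v \<in> range P \<Longrightarrow> P v = v"
  unfolding linear_projection_def by (auto simp: fun_eq_iff)

lemma linear_projection_complement:
  assumes "linear_projection P"
  shows "P (x - P x) = 0"
  using linear_projection_fixes_range[OF assms, of "P x"] linear_diff[OF linear_projection_linear[OF assms]]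
  by simp

lemma has_norm_one_le: "has_norm_one P \<Longrightarrow> norm (P x) \<le> norm x"
  unfolding has_norm_one_def using onorm[of P x] by simp

lemma one_le_onorm_idempotent:
  assumes "bounded_linear Q" and "\<And>x. Q (Q x) = Q x" and "Q w \<noteq> 0"
  shows "1 \<le> onorm Q"
  using onorm[OF assms(1), of "Q w"] assms(2,3) by simp

definition strictly_shrinking_complement :: "('b::real_normed_vector \<Rightarrow> 'b) \<Rightarrow> bool" where
  "strictly_shrinking_complement P \<longleftrightarrow> (\<forall>x. P x \<noteq> 0 \<longrightarrow> norm (x - P x) < norm x)"

lemma HB_inequalities_iff_strictly_shrinking_complement:
  assumes P: "linear_projection P" "range P = annihilator Y" "has_norm_one P"
  shows "(\<forall>x yh yp. yh \<in> range (\<lambda>z. z - P z) \<and> yp \<in> annihilator Y \<and> yp \<noteq> 0 \<and> x = yh + yp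
            \<longrightarrow> norm x > norm yh \<and> norm x \<ge> norm yp)
         \<longleftrightarrow> strictly_shrinking_complement P"
  unfolding strictly_shrinking_complement_def
proof (intro iffI allI impI)
  fix x
  assume HB: "\<forall>x yh yp. yh \<in> range (\<lambda>z. z - P z) \<and> yp \<in> annihilator Y \<and> yp \<noteq> 0 \<and> x = yh + yp
            \<longrightarrow> norm x > norm yh \<and> norm x \<ge> norm yp"
    and "P x \<noteq> 0"
  moreover have "P x \<in> annihilator Y"
    using P(2) by blast
  ultimately show "norm (x - P x) < norm x"
    using HB[rule_format, of "x - P x" "P x" x] by auto
next
  fix x yh yp
  assume shrinking: "\<forall>x. P x \<noteq> 0 \<longrightarrow> norm (x - P x) < norm x"
    and decomposition: "yh \<in> range (\<lambda>z. z - P z) \<and> yp \<in> annihilator Y \<and> yp \<noteq> 0 \<and> x = yh + yp"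
  then obtain z where yh: "yh = z - P z" and yp: "yp \<in> range P" "yp \<noteq> 0" and x: "x = yh + yp"
    using P(2) by blast
  have "P x = P yh + P yp"
    unfolding x by (rule linear_add[OF linear_projection_linear[OF P(1)]])
  also have "\<dots> = yp"
    using yh linear_projection_complement[OF P(1)] linear_projection_fixes_range[OF P(1) yp(1)] by simp
  finally have "P x = yp" .
  then have "norm (x - P x) < norm x" and "norm (P x) \<le> norm x"
    using shrinking[rule_format, of x] yp(2) has_norm_one_le[OF P(3), of x] by simp_all
  then show "norm x > norm yh \<and> norm x \<ge> norm yp"
    using x \<open>P x = yp\<close> by simp
qed

lemma property_HB_iff:
  "property_HB Y \<longleftrightarrow>
     (\<exists>P. linear_projection P \<and> range P = annihilator Y \<and> has_norm_one P \<and>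
          strictly_shrinking_complement P)"
  unfolding property_HB_def using HB_inequalities_iff_strictly_shrinking_complement by blast

section \<open>Metric projections\<close>

lemma metric_projection_nearest:
  assumes "chebyshev V"
  shows "metric_projection V w \<in> V" and "\<And>u. u \<in> V \<Longrightarrow> dist w (metric_projection V w) \<le> dist w u"
proof -
  have "\<exists>!v. v \<in> V \<and> (\<forall>u\<in>V. dist w v \<le> dist w u)"
    using assms unfolding chebyshev_def by blast
  from theI'[OF this] show "metric_projection V w \<in> V" and "\<And>u. u \<in> V \<Longrightarrow> dist w (metric_projection V w) \<le> dist w u"
    unfolding metric_projection_def by blast+
qed

lemma metric_projection_unique:
  assumes "chebyshev V" and "v \<in> V" and "\<And>u. u \<in> V \<Longrightarrow> dist w v \<le> dist w u"
  shows "metric_projection V w = v"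
  unfolding metric_projection_def
proof (rule the1_equality)
  show "\<exists>!v. v \<in> V \<and> (\<forall>u\<in>V. dist w v \<le> dist w u)"
    using assms(1) unfolding chebyshev_def by blast
  show "v \<in> V \<and> (\<forall>u\<in>V. dist w v \<le> dist w u)"
    using assms(2,3) by blast
qed

lemma range_metric_projection:
  assumes "chebyshev V"
  shows "range (metric_projection V) = V"
proof
  show "range (metric_projection V) \<subseteq> V"
    using metric_projection_nearest(1)[OF assms] by blast
  show "V \<subseteq> range (metric_projection V)"
  proof
    fix v
    assume "v \<in> V"
    then have "metric_projection V v = v"
      by (intro metric_projection_unique[OF assms]) simp_all
    then show "v \<in> range (metric_projection V)"
      by (metis rangeI)
  qed
qed

lemma chebyshev_if_strictly_nearest:
  assumes in_V: "\<And>x. P x \<in> V" and nearest: "\<And>x u. u \<in> V \<Longrightarrow> u \<noteq> P x \<Longrightarrow> dist x (P x) < dist x u"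
  shows "chebyshev V" and "metric_projection V = P"
proof -
  have best: "v \<in> V \<and> (\<forall>u\<in>V. dist x v \<le> dist x u) \<longleftrightarrow> v = P x" for x v
  proof
    assume "v \<in> V \<and> (\<forall>u\<in>V. dist x v \<le> dist x u)"
    then show "v = P x"
      using nearest[of v x] in_V[of x] by force
  next
    assume "v = P x"
    then show "v \<in> V \<and> (\<forall>u\<in>V. dist x v \<le> dist x u)"
      using in_V nearest[of _ x] by (metis order.order_iff_strict)
  qed
  show "chebyshev V"
    unfolding chebyshev_def best by blast
  show "metric_projection V = P"
    unfolding metric_projection_def best by simp
qed

lemma metric_projection_strictly_shrinking_complement:
  fixes V :: "'b::real_normed_vector set"
  assumes "chebyshev V" and "0 \<in> V"
  shows "strictly_shrinking_complement (metric_projection V)"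
  unfolding strictly_shrinking_complement_def
proof (intro allI impI)
  fix x
  assume "metric_projection V x \<noteq> 0"
  then obtain u where "u \<in> V" "dist x u < dist x 0"
    using metric_projection_unique[OF assms, of x] by force
  then have "dist x (metric_projection V x) < dist x 0"
    using metric_projection_nearest(2)[OF assms(1), of u x] by linarith
  then show "norm (x - metric_projection V x) < norm x"
    by (simp add: dist_norm)
qed

lemma strictly_shrinking_projection_is_metric_projection:
  fixes P :: "'b::real_normed_vector \<Rightarrow> 'b"
  assumes P: "linear_projection P" and shrinking: "strictly_shrinking_complement P"
  shows "chebyshev (range P)" and "metric_projection (range P) = P"
proof -
  have "dist x (P x) < dist x u" if "u \<in> range P" "u \<noteq> P x" for x u
  proof -
    have "P (x - u) = P x - u"
      using linear_diff[OF linear_projection_linear[OF P]] linear_projection_fixes_range[OF P that(1)]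
      by simp
    then have "norm ((x - u) - P (x - u)) < norm (x - u)"
      using shrinking that(2) unfolding strictly_shrinking_complement_def by (metis right_minus_eq)
    then show ?thesis
      using \<open>P (x - u) = P x - u\<close> by (simp add: dist_norm)
  qed
  then show "chebyshev (range P)" and "metric_projection (range P) = P"
    using chebyshev_if_strictly_nearest[of P "range P"] by blast+
qed

section \<open>Property (U) and property (HB)\<close>

lemma has_norm_one_complement:
  fixes P :: "'b::real_normed_vector \<Rightarrow> 'b"
  assumes P: "linear_projection P" "bounded_linear P"
    and shrinking: "strictly_shrinking_complement P" and "range P \<noteq> UNIV"
  shows "has_norm_one (\<lambda>z. z - P z)"
proof -
  have bounded: "bounded_linear (\<lambda>z. z - P z)"
    using bounded_linear_sub[OF bounded_linear_ident P(2)] by simp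
  have "onorm (\<lambda>z. z - P z) \<le> 1"
  proof (rule onorm_bound)
    show "norm (z - P z) \<le> 1 * norm z" for z
      using shrinking unfolding strictly_shrinking_complement_def by (cases "P z = 0") auto
  qed simp
  moreover obtain w where "w \<notin> range P"
    using \<open>range P \<noteq> UNIV\<close> by blast
  then have "w - P w \<noteq> 0"
    by (metis rangeI right_minus_eq)
  then have "1 \<le> onorm (\<lambda>z. z - P z)"
    using linear_projection_complement[OF P(1)] by (intro one_le_onorm_idempotent[OF bounded]) simp_all
  ultimately show ?thesis
    unfolding has_norm_one_def using bounded by simp
qed

lemma norm_preserving_extension_in_kernel:
  assumes Y: "subspace Y" and P: "range P = annihilator Y" and shrinking: "strictly_shrinking_complement P"
    and f: "norm_preserving_extension Y g f"
  shows "P f = 0"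
proof (rule ccontr)
  assume "P f \<noteq> 0"
  then have "norm (f - P f) < norm f"
    using shrinking unfolding strictly_shrinking_complement_def by blast
  moreover have "P f \<in> annihilator Y"
    using P by blast
  then have "\<forall>y\<in>Y. blinfun_apply (f - P f) y = g y"
    using f unfolding norm_preserving_extension_def annihilator_def by (simp add: blinfun.diff_left)
  then have "subspace_dual_norm Y g \<le> norm (f - P f)"
    by (rule subspace_dual_norm_le_norm[OF Y])
  ultimately show False
    using f unfolding norm_preserving_extension_def by simp
qed

lemma property_U_if_strictly_shrinking_projection:
  assumes Y: "subspace Y" and P: "linear_projection P" "range P = annihilator Y"
    and shrinking: "strictly_shrinking_complement P"
  shows "property_U Y"
  unfolding property_U_iff_unique_extension
proof (intro allI impI ex_ex1I)
  fix g
  assume g: "in_subspace_dual Y g"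
  show "\<exists>f. norm_preserving_extension Y g f"
    using norm_preserving_extension_exists[OF Y g] by blast
  fix f1 f2
  assume f1: "norm_preserving_extension Y g f1" and f2: "norm_preserving_extension Y g f2"
  then have "f1 - f2 \<in> range P"
    using P(2) by (simp add: norm_preserving_extension_def diff_in_annihilator_iff)
  then have "f1 - f2 = P f1 - P f2"
    using linear_projection_fixes_range[OF P(1)] linear_diff[OF linear_projection_linear[OF P(1)]] by metis
  also have "\<dots> = 0"
    using norm_preserving_extension_in_kernel[OF Y P(2) shrinking] f1 f2 by simp
  finally show "f1 = f2"
    by simp
qed

lemma norm_complement_le_subspace_dual_norm:
  assumes Y: "subspace Y" and P: "linear_projection P" "range P = annihilator Y"
    and complement: "has_norm_one (\<lambda>z. z - P z)"
  shows "norm (x - P x) \<le> subspace_dual_norm Y (blinfun_apply x)"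
proof -
  obtain h where h: "norm_preserving_extension Y (blinfun_apply x) h"
    using norm_preserving_extension_exists[OF Y in_subspace_dual_blinfun] .
  then have "h - x \<in> range P"
    using P(2) by (simp add: norm_preserving_extension_def diff_in_annihilator_iff)
  then have "P h - P x = h - x"
    using linear_projection_fixes_range[OF P(1)] linear_diff[OF linear_projection_linear[OF P(1)]]
    by metis
  then have "x - P x = h - P h"
    by (simp add: algebra_simps)
  then show ?thesis
    using has_norm_one_le[OF complement, of h] h unfolding norm_preserving_extension_def by simp
qed

lemma strictly_shrinking_complement_if_property_U:
  assumes Y: "subspace Y" and U: "property_U Y"
    and P: "linear_projection P" "range P = annihilator Y" and complement: "has_norm_one (\<lambda>z. z - P z)"
  shows "strictly_shrinking_complement P"
  unfolding strictly_shrinking_complement_def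
proof (intro allI impI)
  fix x
  assume "P x \<noteq> 0"
  let ?g = "blinfun_apply x"
  have "P x \<in> annihilator Y"
    using P(2) by blast
  then have agrees: "\<forall>y\<in>Y. blinfun_apply (x - P x) y = ?g y"
    unfolding annihilator_def by (simp add: blinfun.diff_left)
  show "norm (x - P x) < norm x"
  proof (rule ccontr)
    assume "\<not> norm (x - P x) < norm x"
    moreover have "norm (x - P x) \<le> norm x"
      using has_norm_one_le[OF complement] .
    moreover have "subspace_dual_norm Y ?g \<le> norm x"
      by (rule subspace_dual_norm_le_norm[OF Y]) simp
    moreover have "subspace_dual_norm Y ?g \<le> norm (x - P x)"
      using agrees by (rule subspace_dual_norm_le_norm[OF Y])
    moreover have "norm (x - P x) \<le> subspace_dual_norm Y ?g"
      by (rule norm_complement_le_subspace_dual_norm[OF Y P complement])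
    ultimately have "norm x = subspace_dual_norm Y ?g" and "norm (x - P x) = subspace_dual_norm Y ?g"
      by linarith+
    then have "norm_preserving_extension Y ?g x" and "norm_preserving_extension Y ?g (x - P x)"
      unfolding norm_preserving_extension_def using agrees by simp_all
    moreover have "\<exists>!f. norm_preserving_extension Y ?g f"
      using U in_subspace_dual_blinfun unfolding property_U_iff_unique_extension by blast
    ultimately have "x = x - P x"
      by blast
    then show False
      using \<open>P x \<noteq> 0\<close> by simp
  qed
qed

lemma property_HB_iff_property_U_and_projections:
  fixes Y :: "'a::real_normed_vector set"
  assumes Y: "subspace Y" and "Y \<noteq> {0}"
  shows "property_HB Y \<longleftrightarrow>
           property_U Y \<and>
           (\<exists>P. linear_projection P \<and> range P = annihilator Y \<and>
                has_norm_one P \<and> has_norm_one (\<lambda>z. z - P z))"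
proof
  assume "property_HB Y"
  then obtain P where P: "linear_projection P" "range P = annihilator Y" "has_norm_one P"
    and shrinking: "strictly_shrinking_complement P"
    unfolding property_HB_iff by blast
  obtain y where "y \<in> Y" "y \<noteq> 0"
    using \<open>Y \<noteq> {0}\<close> subspace_0[OF Y] by blast
  then have "range P \<noteq> UNIV"
    unfolding P(2) by (rule annihilator_neq_UNIV)
  moreover have "bounded_linear P"
    using P(3) unfolding has_norm_one_def by simp
  ultimately have "has_norm_one (\<lambda>z. z - P z)"
    using has_norm_one_complement[OF P(1) _ shrinking] by blast
  then show "property_U Y \<and>
      (\<exists>P. linear_projection P \<and> range P = annihilator Y \<and> has_norm_one P \<and> has_norm_one (\<lambda>z. z - P z))"
    using property_U_if_strictly_shrinking_projection[OF Y P(1,2) shrinking] P by blast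
next
  assume "property_U Y \<and>
      (\<exists>P. linear_projection P \<and> range P = annihilator Y \<and> has_norm_one P \<and> has_norm_one (\<lambda>z. z - P z))"
  then obtain P where "property_U Y" "linear_projection P" "range P = annihilator Y" "has_norm_one P"
    "has_norm_one (\<lambda>z. z - P z)"
    by blast
  then show "property_HB Y"
    unfolding property_HB_iff using strictly_shrinking_complement_if_property_U[OF Y] by blast
qed

lemma property_HB_iff_linear_metric_projection:
  "property_HB Y \<longleftrightarrow>
     chebyshev (annihilator Y) \<and>
     linear_projection (metric_projection (annihilator Y)) \<and>
     has_norm_one (metric_projection (annihilator Y))"
proof
  assume "property_HB Y"
  then obtain P where P: "linear_projection P" "range P = annihilator Y" "has_norm_one P"
    and shrinking: "strictly_shrinking_complement P"
    unfolding property_HB_iff by blast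
  then show "chebyshev (annihilator Y) \<and>
      linear_projection (metric_projection (annihilator Y)) \<and>
      has_norm_one (metric_projection (annihilator Y))"
    using strictly_shrinking_projection_is_metric_projection[OF P(1) shrinking] by simp
next
  assume "chebyshev (annihilator Y) \<and>
      linear_projection (metric_projection (annihilator Y)) \<and>
      has_norm_one (metric_projection (annihilator Y))"
  then show "property_HB Y"
    unfolding property_HB_iff
    using range_metric_projection metric_projection_strictly_shrinking_complement zero_in_annihilator
    by blast
qed

theorem theorem3p3:
  fixes Y :: "'a::banach set"
  assumes "subspace Y" and "closed Y" and "Y \<noteq> {0}"
  shows "(property_HB Y \<longleftrightarrow>
            property_U Y \<and>
            (\<exists>P :: ('a \<Rightarrow>\<^sub>L real) \<Rightarrow> ('a \<Rightarrow>\<^sub>L real).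
               linear_projection P \<and> range P = annihilator Y \<and>
               has_norm_one P \<and> has_norm_one (\<lambda>z. z - P z)))
       \<and> (property_HB Y \<longleftrightarrow>
            chebyshev (annihilator Y) \<and>
            linear_projection (metric_projection (annihilator Y)) \<and>
            has_norm_one (metric_projection (annihilator Y)))"
  using property_HB_iff_property_U_and_projections[OF assms(1,3)] property_HB_iff_linear_metric_projection
  by blast

end
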